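(* Let $d\geq1$ and $T\geq2$ be integers, let $X=(X_t)_{t=1}^T$, $X_t=(X_{t,j})_{j=1}^d$, be the canonical process on $(\mathbb{R}^d)^T$, and let $P$ be a probability measure on $(\mathbb{R}^d)^T$ such that, denoting by $\mu_{t,j}$ the law of $X_{t,j}$ under $P$, no $\mu_{t,j}$ is a Dirac measure. Suppose that $P$ is equivalent (has the same null sets as) the product measure $\bigotimes_{t=1}^T\bigotimes_{j=1}^d\mu_{t,j}$. Then the set of semistatic strategies is closed under $P$-a.s. convergence. Moreover, uniqueness and convergence of portfolio positions hold.
   Context: A semistatic strategy is a random variable $V$ with $V=\sum_{t=1}^{T-1}\sum_{j=1}^d\hat h_{t,j}(X_1,\dots,X_t)(X_{t+1,j}-X_{t,j})+\sum_{j=1}^d\hat g_j(X_{T,j})$ $P$-a.s. for some real-valued measurable functions $\hat h_{t,j}$ and $\hat g_j$. Writing $h_{t,j}:=\hat h_{t,j}(X_1,\dots,X_t)$ and $g_j:=\hat g_j(X_{T,j})$, the pair $(h,g)$ is a portfolio position of $V$. A normalization is the choice of an anchor point $x^0\in(\mathbb{R}^d)^T$ and the requirement $\hat g_j(x^0_{T,j})=0$ for $j=2,\dots,d$. Uniqueness of portfolio positions holds if for any semistatic strategy $V$, after such a normalization, the portfolio position $(h,g)$ is uniquely determined $P$-a.s. Convergence of portfolio positions holds if, after such a normalization, for any semistatic strategies $V^{(n)}$ converging $P$-a.s., the corresponding portfolio positions $(h^{(n)},g^{(n)})$ also converge $P$-a.s. *)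

theory Defs
  imports "HOL-Probability.Probability"
begin

text \<open>Paths: x t j is the value X_{t+1,j+1} (0-based time t < T and asset j < d).\<close>

definition canon_space :: "nat \<Rightarrow> nat \<Rightarrow> (nat \<Rightarrow> nat \<Rightarrow> real) measure" where
  "canon_space d T = PiM {..<T} (\<lambda>_. PiM {..<d} (\<lambda>_. lborel))"

text \<open>Space of path segments up to (0-based) time t, i.e. of (X_1,...,X_{t+1}).\<close>
definition past_space :: "nat \<Rightarrow> nat \<Rightarrow> (nat \<Rightarrow> nat \<Rightarrow> real) measure" where
  "past_space d t = PiM {..t} (\<lambda>_. PiM {..<d} (\<lambda>_. lborel))"

definition marginal :: "(nat \<Rightarrow> nat \<Rightarrow> real) measure \<Rightarrow> nat \<Rightarrow> nat \<Rightarrow> real measure" where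
  "marginal P t j = distr P lborel (\<lambda>x. x t j)"

definition marginal_product :: "nat \<Rightarrow> nat \<Rightarrow> (nat \<Rightarrow> nat \<Rightarrow> real) measure \<Rightarrow> (nat \<Rightarrow> nat \<Rightarrow> real) measure" where
  "marginal_product d T P = PiM {..<T} (\<lambda>t. PiM {..<d} (\<lambda>j. marginal P t j))"

definition is_portfolio_position ::
  "nat \<Rightarrow> nat \<Rightarrow> (nat \<Rightarrow> nat \<Rightarrow> real) measure \<Rightarrow> ((nat \<Rightarrow> nat \<Rightarrow> real) \<Rightarrow> real)
   \<Rightarrow> (nat \<Rightarrow> nat \<Rightarrow> (nat \<Rightarrow> nat \<Rightarrow> real) \<Rightarrow> real) \<Rightarrow> (nat \<Rightarrow> real \<Rightarrow> real) \<Rightarrow> bool" where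
  "is_portfolio_position d T P V hh gg \<longleftrightarrow>
     (\<forall>t<T - 1. \<forall>j<d. hh t j \<in> borel_measurable (past_space d t)) \<and>
     (\<forall>j<d. gg j \<in> borel_measurable borel) \<and>
     (AE x in P. V x = (\<Sum>t<T - 1. \<Sum>j<d. hh t j (restrict x {..t}) * (x (Suc t) j - x t j))
                        + (\<Sum>j<d. gg j (x (T - 1) j)))"

definition semistatic ::
  "nat \<Rightarrow> nat \<Rightarrow> (nat \<Rightarrow> nat \<Rightarrow> real) measure \<Rightarrow> ((nat \<Rightarrow> nat \<Rightarrow> real) \<Rightarrow> real) \<Rightarrow> bool" where
  "semistatic d T P V \<longleftrightarrow> V \<in> borel_measurable P \<and> (\<exists>hh gg. is_portfolio_position d T P V hh gg)"

end

theory Submission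
  imports Defs
begin

text \<open>
  Since P is equivalent to the product of its marginals, everything can be proved under that
  product, by backward induction over time. For fixed X_1, ..., X_{T-1} the value is a separable
  function of X_T: a sum over the assets j of terms a_j * X_{T,j} + g_j(X_{T,j}), with slope
  a_j = h_{T-1,j}(X_1, ..., X_{T-1}). Under a product measure, a.s. convergence of a separable sum
  forces every summand to converge up to constants, as one sees by freezing all but one coordinate
  at a generic point. Since no marginal is a Dirac mass, a sequence a_n * u + b_n that converges for
  a.e. u has convergent coefficients a_n and b_n. This yields convergence of the last dynamic
  positions, and the last trading period turns into a static payoff at time T - 1. Uniqueness
  follows by applying convergence to a sequence that alternates between two positions, closedness
  by passing to the limit in the positions.
\<close>

lemma convergent_affine_two_points:
  fixes a b :: "nat \<Rightarrow> real"
  assumes "convergent (\<lambda>n. a n * u + b n)" "convergent (\<lambda>n. a n * v + b n)" "u \<noteq> v"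
  shows "convergent a" "convergent b"
proof -
  have "convergent (\<lambda>n. (a n * u + b n) - (a n * v + b n))"
    using assms(1,2) by (rule convergent_diff)
  then have "convergent (\<lambda>n. a n * (u - v))"
    by (simp add: algebra_simps)
  then show a: "convergent a"
    using assms(3) convergent_mult_const_right_iff[of "u - v" a] by simp
  have "convergent (\<lambda>n. (a n * u + b n) - a n * u)"
    using assms(1) a by (intro convergent_diff convergent_mult convergent_const)
  then show "convergent b" by simp
qed

lemma alternating_convergent_tendsto_diff:
  fixes a b :: real and c :: "nat \<Rightarrow> real"
  assumes "convergent (\<lambda>n. (if even n then a else b) + c n)"
  shows "(\<lambda>n. c (Suc (2 * n)) - c (2 * n)) \<longlonglongrightarrow> a - b"
proof -
  from assms obtain L where L: "(\<lambda>n. (if even n then a else b) + c n) \<longlonglongrightarrow> L"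
    by (auto simp: convergent_def)
  have "strict_mono (\<lambda>n::nat. 2 * n)" "strict_mono (\<lambda>n::nat. Suc (2 * n))"
    by (auto simp: strict_mono_def)
  from this[THEN LIMSEQ_subseq_LIMSEQ[OF L]]
  have "(\<lambda>n. a + c (2 * n)) \<longlonglongrightarrow> L" "(\<lambda>n. b + c (Suc (2 * n))) \<longlonglongrightarrow> L"
    by (simp_all add: comp_def)
  from tendsto_diff[OF tendsto_add[OF this(2) tendsto_const[of "a - b"]] this(1)]
  show ?thesis by (simp add: algebra_simps)
qed

definition nondirac_law :: "real measure \<Rightarrow> bool" where
  "nondirac_law \<mu> \<longleftrightarrow> prob_space \<mu> \<and> sets \<mu> = sets borel \<and> (\<forall>c. \<mu> \<noteq> return lborel c)"

lemma (in prob_space) AE_imp_ex: "AE x in M. P x \<Longrightarrow> \<exists>x. P x"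
  using eventually_happens'[OF ae_filter_bot] .

lemma nondirac_law_AE_two_points:
  assumes "nondirac_law \<mu>" "AE u in \<mu>. P u"
  obtains u v where "u \<noteq> v" "P u" "P v"
proof -
  interpret prob_space \<mu> using assms(1) by (simp add: nondirac_law_def)
  obtain u where u: "P u" using AE_imp_ex[OF assms(2)] ..
  have "\<not> (AE v in \<mu>. v = u)"
  proof
    assume "AE v in \<mu>. v = u"
    have sets: "sets \<mu> = sets borel" using assms(1) by (simp add: nondirac_law_def)
    have space: "space \<mu> = UNIV" using sets_eq_imp_space_eq[OF sets] by simp
    have "\<mu> = distr \<mu> \<mu> (\<lambda>v. v)" by simp
    also have "\<dots> = distr \<mu> \<mu> (\<lambda>_. u)"
      by (rule distr_cong_AE) (use \<open>AE v in \<mu>. v = u\<close> space in simp_all)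
    also have "\<dots> = return \<mu> u"
      using space by simp
    also have "\<dots> = return lborel u"
      by (rule return_cong) (simp add: sets)
    finally show False using assms(1) unfolding nondirac_law_def by blast
  qed
  then obtain v where "v \<noteq> u" "P v"
    using eventually_mono[OF assms(2), of "\<lambda>v. v = u"] by blast
  then show ?thesis using that u by blast
qed

lemma nondirac_law_AE_convergent_affine:
  fixes a b :: "nat \<Rightarrow> real"
  assumes "nondirac_law \<mu>" "AE u in \<mu>. convergent (\<lambda>n. a n * u + b n)"
  shows "convergent a" "convergent b"
  using nondirac_law_AE_two_points[OF assms] convergent_affine_two_points by metis+

lemma nondirac_law_AE_convergent_affine_diff:
  fixes a a' b b' :: "nat \<Rightarrow> real" and f :: "nat \<Rightarrow> real \<Rightarrow> real"
  assumes "nondirac_law \<mu>"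
    and "AE u in \<mu>. convergent (\<lambda>n. a n * u + f n u + b n)"
    and "AE u in \<mu>. convergent (\<lambda>n. a' n * u + f n u + b' n)"
  shows "convergent (\<lambda>n. a n - a' n) \<and> convergent (\<lambda>n. b n - b' n)"
proof -
  have "AE u in \<mu>. convergent (\<lambda>n. (a n - a' n) * u + (b n - b' n))"
    using assms(2,3)
  proof eventually_elim
    case (elim u)
    from convergent_diff[OF elim] show ?case
      by (simp add: algebra_simps)
  qed
  from nondirac_law_AE_convergent_affine[OF assms(1) this] show ?thesis ..
qed

lemma AE_PiM_insert:
  fixes M :: "'i \<Rightarrow> 'a measure"
  assumes prob: "\<And>j. j \<in> insert i I \<Longrightarrow> prob_space (M j)"
    and ae: "AE z in PiM (insert i I) M. P z"
  shows "AE X in PiM I M. AE u in M i. P (X(i := u))"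
proof -
  interpret Mi: prob_space "M i" using prob by simp
  interpret PI: prob_space "PiM I M" using prob by (intro prob_space_PiM) simp
  interpret pair_prob_space "M i" "PiM I M" ..
  interpret swapped: pair_prob_space "PiM I M" "M i" ..
  have "(\<lambda>w. (snd w)(i := fst w)) \<in> measurable (M i \<Otimes>\<^sub>M PiM I M) (PiM (insert i I) M)"
    by (rule measurable_fun_upd[where J=I]) auto
  then have upd: "(\<lambda>(u, X). X(i := u)) \<in> measurable (M i \<Otimes>\<^sub>M PiM I M) (PiM (insert i I) M)"
    by (simp add: case_prod_beta')
  have D: "distr (M i \<Otimes>\<^sub>M PiM I M) (PiM (insert i I) M) (\<lambda>(u, X). X(i := u)) = PiM (insert i I) M"
    using prob by (intro distr_pair_PiM_eq_PiM) auto
  have "AE w in M i \<Otimes>\<^sub>M PiM I M. P ((\<lambda>(u, X). X(i := u)) w)"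
    by (rule AE_distrD[OF upd]) (subst D, rule ae)
  then have "AE w in PiM I M \<Otimes>\<^sub>M M i. P ((\<lambda>(u, X). X(i := u)) ((\<lambda>(X, u). (u, X)) w))"
    by (intro AE_distrD[OF measurable_pair_swap']) (subst distr_pair_swap[symmetric])
  then show ?thesis
    using swapped.AE_pair by fastforce
qed

lemma AE_PiM_singleton:
  fixes M :: "'i \<Rightarrow> 'a measure"
  assumes "prob_space (M i)" and "AE x in PiM {i} M. P (x i)"
  shows "AE u in M i. P u"
proof -
  interpret prob_space "PiM {} M"
    by (rule prob_space_PiM) simp
  have "AE X in PiM {} M. AE u in M i. P ((X(i := u)) i)"
    by (rule AE_PiM_insert[where P="\<lambda>x. P (x i)"]) (use assms in auto)
  then show ?thesis
    by simp
qed

lemma AE_PiM_restrict: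
  fixes M :: "'i \<Rightarrow> 'a measure"
  assumes prob: "\<And>i. i \<in> I \<Longrightarrow> prob_space (M i)" and "J \<subseteq> I" "finite I"
    and ae: "AE x in PiM J M. P x"
  shows "AE z in PiM I M. P (restrict z J)"
proof -
  \<comment> \<open>\<open>distr_restrict\<close> needs a probability space at every index, also outside \<open>I\<close>\<close>
  define M' where "M' i = (if i \<in> I then M i else return (count_space UNIV) undefined)" for i
  interpret product_prob_space M'
    unfolding product_prob_space_def product_prob_space_axioms_def product_sigma_finite_def
    using prob by (auto simp: M'_def prob_space_imp_sigma_finite prob_space_return)
  have M': "PiM I M' = PiM I M" "PiM J M' = PiM J M"
    by (rule PiM_cong; use \<open>J \<subseteq> I\<close> in \<open>auto simp: M'_def\<close>)+
  show ?thesis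
    using AE_distrD[OF measurable_restrict_subset[OF \<open>J \<subseteq> I\<close>]]
      distr_restrict[OF \<open>J \<subseteq> I\<close> \<open>finite I\<close>] ae
    by (metis M')
qed

lemma AE_convergent_separable_sum:
  fixes \<nu> :: "nat \<Rightarrow> real measure" and f :: "nat \<Rightarrow> nat \<Rightarrow> real \<Rightarrow> real"
  assumes prob: "\<And>j. j < d \<Longrightarrow> prob_space (\<nu> j)"
    and conv: "AE y in PiM {..<d} \<nu>. convergent (\<lambda>n. K n + (\<Sum>j<d. f n j (y j)))"
  obtains c where "convergent (\<lambda>n. K n - (\<Sum>j<d. c n j))"
    and "\<And>j. j < d \<Longrightarrow> AE u in \<nu> j. convergent (\<lambda>n. f n j u + c n j)"
proof -
  let ?S = "\<lambda>y n. K n + (\<Sum>j<d. f n j (y j))"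
  have "AE y in PiM {..<d} \<nu>. AE u in \<nu> j. convergent (?S (y(j := u)))" if "j \<in> {..<d}" for j
  proof -
    have j: "insert j {..<d} = {..<d}" using that by blast
    from AE_PiM_insert[of j "{..<d}" \<nu>, unfolded j, OF prob conv] show ?thesis
      by simp
  qed
  then have "AE y in PiM {..<d} \<nu>. \<forall>j\<in>{..<d}. AE u in \<nu> j. convergent (?S (y(j := u)))"
    by (intro AE_finite_allI) auto
  then obtain y where y: "convergent (?S y)" "\<forall>j\<in>{..<d}. AE u in \<nu> j. convergent (?S (y(j := u)))"
    using prob_space.AE_imp_ex[OF prob_space_PiM AE_conjI[OF conv]] prob by blast
  define c where "c n j = - f n j (y j)" for n j
  have "?S y = (\<lambda>n. K n - (\<Sum>j<d. c n j))"
    by (simp add: c_def sum_negf)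
  moreover have slice: "?S (y(j := u)) n - ?S y n = f n j u + c n j" if "j < d" for j u n
    using that by (simp add: c_def sum.remove[of "{..<d}" j])
  have "AE u in \<nu> j. convergent (\<lambda>n. f n j u + c n j)" if j: "j < d" for j
  proof -
    have "AE u in \<nu> j. convergent (?S (y(j := u)))" using y(2) j by blast
    then show ?thesis
    proof (rule eventually_mono)
      fix u assume "convergent (?S (y(j := u)))"
      from convergent_diff[OF this y(1)] show "convergent (\<lambda>n. f n j u + c n j)"
        by (simp only: slice[OF j])
    qed
  qed
  ultimately show ?thesis
    using that y(1) by simp
qed

lemma AE_convergent_separable_sum_family:
  fixes M :: "'a measure" and \<nu> :: "nat \<Rightarrow> real measure" and f :: "nat \<Rightarrow> nat \<Rightarrow> 'a \<Rightarrow> real \<Rightarrow> real"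
  assumes prob: "\<And>j. j < d \<Longrightarrow> prob_space (\<nu> j)"
    and conv: "AE x in M. AE y in PiM {..<d} \<nu>. convergent (\<lambda>n. K n x + (\<Sum>j<d. f n j x (y j)))"
  obtains c where "AE x in M. convergent (\<lambda>n. K n x - (\<Sum>j<d. c x n j)) \<and>
    (\<forall>j<d. AE u in \<nu> j. convergent (\<lambda>n. f n j x u + c x n j))"
proof -
  define good where "good x c \<longleftrightarrow> convergent (\<lambda>n. K n x - (\<Sum>j<d. c n j)) \<and>
    (\<forall>j<d. AE u in \<nu> j. convergent (\<lambda>n. f n j x u + c n j))" for x c
  have "AE x in M. good x (SOME c. good x c)"
    using conv
  proof (rule eventually_mono)
    fix x assume "AE y in PiM {..<d} \<nu>. convergent (\<lambda>n. K n x + (\<Sum>j<d. f n j x (y j)))"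
    from AE_convergent_separable_sum[where K="\<lambda>n. K n x" and f="\<lambda>n j. f n j x", OF prob this]
    obtain c where "good x c"
      unfolding good_def by blast
    then show "good x (SOME c. good x c)"
      by (rule someI[of "good x"])
  qed
  then show ?thesis
    unfolding good_def by (rule that)
qed

lemma AE_convergent_affine_slices:
  fixes M :: "'a measure" and \<nu> :: "nat \<Rightarrow> real measure"
  assumes M: "prob_space M" and \<nu>: "\<And>j. j < d \<Longrightarrow> nondirac_law (\<nu> j)"
    and conv: "AE x in M. AE y in PiM {..<d} \<nu>.
      convergent (\<lambda>n. R n x + (\<Sum>j<d. A n j x * y j + F n j (y j)))"
  obtains \<alpha> e where "\<And>j. j < d \<Longrightarrow> AE x in M. convergent (\<lambda>n. A n j x - \<alpha> n j)"
    and "AE x in M. convergent (\<lambda>n. R n x - (\<Sum>j<d. e n j))"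
    and "\<And>j. j < d \<Longrightarrow> AE u in \<nu> j. convergent (\<lambda>n. \<alpha> n j * u + F n j u + e n j)"
proof -
  have "\<And>j. j < d \<Longrightarrow> prob_space (\<nu> j)"
    using \<nu> by (simp add: nondirac_law_def)
  from AE_convergent_separable_sum_family[where K=R and f="\<lambda>n j x u. A n j x * u + F n j u",
      OF this conv]
  obtain c where good: "AE x in M. convergent (\<lambda>n. R n x - (\<Sum>j<d. c x n j)) \<and>
      (\<forall>j<d. AE u in \<nu> j. convergent (\<lambda>n. A n j x * u + F n j u + c x n j))"
    by blast
  then obtain x0 where x0: "\<forall>j<d. AE u in \<nu> j. convergent (\<lambda>n. A n j x0 * u + F n j u + c x0 n j)"
    using prob_space.AE_imp_ex[OF M] by blast
  define \<alpha> where "\<alpha> n j = A n j x0" for n j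
  define e where "e = c x0"
  have diffs: "AE x in M. convergent (\<lambda>n. A n j x - \<alpha> n j) \<and> convergent (\<lambda>n. c x n j - e n j)"
    if j: "j < d" for j
    using good
  proof (rule eventually_mono)
    fix x assume "convergent (\<lambda>n. R n x - (\<Sum>j<d. c x n j)) \<and>
      (\<forall>j<d. AE u in \<nu> j. convergent (\<lambda>n. A n j x * u + F n j u + c x n j))"
    with x0 j have "AE u in \<nu> j. convergent (\<lambda>n. A n j x * u + F n j u + c x n j)"
      "AE u in \<nu> j. convergent (\<lambda>n. \<alpha> n j * u + F n j u + e n j)"
      unfolding \<alpha>_def e_def by auto
    from nondirac_law_AE_convergent_affine_diff[OF \<nu>[OF j] this]
    show "convergent (\<lambda>n. A n j x - \<alpha> n j) \<and> convergent (\<lambda>n. c x n j - e n j)" .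
  qed
  have "AE x in M. \<forall>j\<in>{..<d}. convergent (\<lambda>n. c x n j - e n j)"
    using diffs by (intro AE_finite_allI) (simp_all add: eventually_conj_iff)
  with good have "AE x in M. convergent (\<lambda>n. R n x - (\<Sum>j<d. e n j))"
  proof eventually_elim
    case (elim x)
    then have "convergent (\<lambda>n. (R n x - (\<Sum>j<d. c x n j)) + (\<Sum>j<d. c x n j - e n j))"
      by (intro convergent_add convergent_sum) auto
    then show ?case
      by (simp add: sum_subtractf)
  qed
  moreover have "\<And>j. j < d \<Longrightarrow> AE x in M. convergent (\<lambda>n. A n j x - \<alpha> n j)"
    using diffs by (simp add: eventually_conj_iff)
  moreover have "\<And>j. j < d \<Longrightarrow> AE u in \<nu> j. convergent (\<lambda>n. \<alpha> n j * u + F n j u + e n j)"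
    using x0 unfolding \<alpha>_def e_def by simp
  ultimately show ?thesis
    using that by blast
qed

definition trading_gains ::
  "nat \<Rightarrow> nat \<Rightarrow> (nat \<Rightarrow> nat \<Rightarrow> (nat \<Rightarrow> nat \<Rightarrow> real) \<Rightarrow> real) \<Rightarrow> (nat \<Rightarrow> nat \<Rightarrow> real) \<Rightarrow> real" where
  "trading_gains d K h x = (\<Sum>t<K. \<Sum>j<d. h t j (restrict x {..t}) * (x (Suc t) j - x t j))"

lemma trading_gains_0 [simp]: "trading_gains d 0 h x = 0"
  by (simp add: trading_gains_def)

lemma trading_gains_fun_upd_Suc:
  "trading_gains d (Suc K) h (x(Suc K := y)) =
    trading_gains d K h x + (\<Sum>j<d. h K j (restrict x {..K}) * (y j - x K j))"
proof -
  have "restrict (x(Suc K := y)) {..t} = restrict x {..t}" if "t \<le> K" for t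
    using that by (auto simp: restrict_def)
  then show ?thesis
    by (simp add: trading_gains_def)
qed

lemma AE_convergent_last_period:
  fixes d K :: nat and \<mu> :: "nat \<Rightarrow> nat \<Rightarrow> real measure" and G :: "nat \<Rightarrow> nat \<Rightarrow> real \<Rightarrow> real"
    and H :: "nat \<Rightarrow> nat \<Rightarrow> nat \<Rightarrow> (nat \<Rightarrow> nat \<Rightarrow> real) \<Rightarrow> real"
  defines "M \<equiv> \<lambda>K. PiM {..K} (\<lambda>t. PiM {..<d} (\<mu> t))"
  assumes prob: "\<And>t j. t \<le> K \<Longrightarrow> j < d \<Longrightarrow> prob_space (\<mu> t j)"
    and nondirac: "\<And>j. j < d \<Longrightarrow> nondirac_law (\<mu> (Suc K) j)"
    and conv: "AE x in M (Suc K).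
      convergent (\<lambda>n. trading_gains d (Suc K) (H n) x + (\<Sum>j<d. G n j (x (Suc K) j)))"
  obtains \<alpha> e where "\<And>j. j < d \<Longrightarrow> AE x in M K. convergent (\<lambda>n. H n K j x - \<alpha> n j)"
    and "AE x in M K. convergent (\<lambda>n. trading_gains d K (H n) x + (\<Sum>j<d. - \<alpha> n j * x K j - e n j))"
    and "\<And>j. j < d \<Longrightarrow> AE u in \<mu> (Suc K) j. convergent (\<lambda>n. \<alpha> n j * u + G n j u + e n j)"
proof -
  define R where "R n x = trading_gains d K (H n) x - (\<Sum>j<d. H n K j x * x K j)" for n x
  have probPi: "prob_space (PiM {..<d} (\<mu> t))" if "t \<in> insert (Suc K) {..K}" for t
    using prob nondirac that by (intro prob_space_PiM) (auto simp: nondirac_law_def)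
  have "prob_space (M K)"
    unfolding M_def by (rule prob_space_PiM) (simp add: probPi)
  have "AE x in M K. AE y in PiM {..<d} (\<mu> (Suc K)).
      convergent (\<lambda>n. trading_gains d (Suc K) (H n) (x(Suc K := y)) + (\<Sum>j<d. G n j (y j)))"
    using AE_PiM_insert[OF probPi conv[unfolded M_def atMost_Suc]] unfolding M_def by simp
  with AE_space have "AE x in M K. AE y in PiM {..<d} (\<mu> (Suc K)).
      convergent (\<lambda>n. R n x + (\<Sum>j<d. H n K j x * y j + G n j (y j)))"
  proof eventually_elim
    case (elim x)
    then have "restrict x {..K} = x"
      unfolding M_def space_PiM by (blast intro: PiE_restrict)
    then have "trading_gains d (Suc K) (H n) (x(Suc K := y)) + (\<Sum>j<d. G n j (y j))
        = R n x + (\<Sum>j<d. H n K j x * y j + G n j (y j))" for n y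
      by (simp add: trading_gains_fun_upd_Suc R_def sum.distrib right_diff_distrib sum_subtractf)
    with elim(2) show ?case
      by simp
  qed
  from AE_convergent_affine_slices[where R=R and A="\<lambda>n j x. H n K j x" and F=G,
      OF \<open>prob_space (M K)\<close> nondirac this]
  obtain \<alpha> e where slopes: "\<And>j. j < d \<Longrightarrow> AE x in M K. convergent (\<lambda>n. H n K j x - \<alpha> n j)"
    and rest: "AE x in M K. convergent (\<lambda>n. R n x - (\<Sum>j<d. e n j))"
    and static: "\<And>j. j < d \<Longrightarrow> AE u in \<mu> (Suc K) j. convergent (\<lambda>n. \<alpha> n j * u + G n j u + e n j)"
    by blast
  have "AE x in M K. \<forall>j\<in>{..<d}. convergent (\<lambda>n. H n K j x - \<alpha> n j)"
    using slopes by (intro AE_finite_allI) auto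
  with rest have "AE x in M K.
      convergent (\<lambda>n. trading_gains d K (H n) x + (\<Sum>j<d. - \<alpha> n j * x K j - e n j))"
  proof eventually_elim
    case (elim x)
    have "trading_gains d K (H n) x + (\<Sum>j<d. - \<alpha> n j * x K j - e n j)
        = (R n x - (\<Sum>j<d. e n j)) + (\<Sum>j<d. (H n K j x - \<alpha> n j) * x K j)" for n
      by (simp add: R_def sum.distrib sum_subtractf sum_negf left_diff_distrib)
    moreover have "convergent (\<lambda>n. (R n x - (\<Sum>j<d. e n j)) + (\<Sum>j<d. (H n K j x - \<alpha> n j) * x K j))"
      using elim by (intro convergent_add convergent_sum convergent_mult convergent_const) auto
    ultimately show ?case by simp
  qed
  from that[OF slopes this static] show ?thesis .
qed

lemma convergent_positions_PiM:
  fixes \<mu> :: "nat \<Rightarrow> nat \<Rightarrow> real measure" and G :: "nat \<Rightarrow> nat \<Rightarrow> real \<Rightarrow> real"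
    and H :: "nat \<Rightarrow> nat \<Rightarrow> nat \<Rightarrow> (nat \<Rightarrow> nat \<Rightarrow> real) \<Rightarrow> real"
  assumes "\<And>t j. t \<le> K \<Longrightarrow> j < d \<Longrightarrow> nondirac_law (\<mu> t j)"
    and "AE x in PiM {..K} (\<lambda>t. PiM {..<d} (\<mu> t)).
      convergent (\<lambda>n. trading_gains d K (H n) x + (\<Sum>j<d. G n j (x K j)))"
  shows "(\<forall>t<K. \<forall>j<d. AE x in PiM {..t} (\<lambda>t. PiM {..<d} (\<mu> t)). convergent (\<lambda>n. H n t j x)) \<and>
    (\<exists>c. convergent (\<lambda>n. \<Sum>j<d. c n j) \<and> (\<forall>j<d. AE u in \<mu> K j. convergent (\<lambda>n. G n j u + c n j)))"
  using assms
proof (induction K arbitrary: G)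
  case 0
  then have prob: "\<And>j. j < d \<Longrightarrow> prob_space (\<mu> 0 j)"
    by (simp add: nondirac_law_def)
  have "AE x in PiM {0} (\<lambda>t. PiM {..<d} (\<mu> t)). convergent (\<lambda>n. 0 + (\<Sum>j<d. G n j (x 0 j)))"
    using "0.prems"(2) unfolding atMost_0 by simp
  from AE_PiM_singleton[OF prob_space_PiM this]
  have "AE y in PiM {..<d} (\<mu> 0). convergent (\<lambda>n. 0 + (\<Sum>j<d. G n j (y j)))"
    using prob by simp
  from AE_convergent_separable_sum[where \<nu>="\<mu> 0" and K="\<lambda>_. 0" and f=G, OF prob this]
  obtain c where "convergent (\<lambda>n. 0 - (\<Sum>j<d. c n j))"
    and "\<And>j. j < d \<Longrightarrow> AE u in \<mu> 0 j. convergent (\<lambda>n. G n j u + c n j)"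
    by blast
  then show ?case
    using convergent_minus_iff by fastforce
next
  case (Suc K)
  note nondirac = Suc.prems(1)
  have nondirac_K: "\<And>t j. t \<le> K \<Longrightarrow> j < d \<Longrightarrow> nondirac_law (\<mu> t j)"
    using nondirac by simp
  then have "\<And>t j. t \<le> K \<Longrightarrow> j < d \<Longrightarrow> prob_space (\<mu> t j)"
    by (simp add: nondirac_law_def)
  from AE_convergent_last_period[OF this nondirac[OF order.refl] Suc.prems(2)]
  obtain \<alpha> e
    where slopes: "\<And>j. j < d \<Longrightarrow>
      AE x in PiM {..K} (\<lambda>t. PiM {..<d} (\<mu> t)). convergent (\<lambda>n. H n K j x - \<alpha> n j)"
    and last: "AE x in PiM {..K} (\<lambda>t. PiM {..<d} (\<mu> t)).
      convergent (\<lambda>n. trading_gains d K (H n) x + (\<Sum>j<d. - \<alpha> n j * x K j - e n j))"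
    and static: "\<And>j. j < d \<Longrightarrow> AE u in \<mu> (Suc K) j. convergent (\<lambda>n. \<alpha> n j * u + G n j u + e n j)"
    by blast
  \<comment> \<open>the last trading period becomes a static payoff at time \<open>K\<close>, with slopes \<open>-\<alpha>\<close>\<close>
  from Suc.IH[where G="\<lambda>n j u. - \<alpha> n j * u - e n j", OF nondirac_K last]
  obtain c'
    where IH_H: "\<forall>t<K. \<forall>j<d. AE x in PiM {..t} (\<lambda>t. PiM {..<d} (\<mu> t)). convergent (\<lambda>n. H n t j x)"
    and IH_sum: "convergent (\<lambda>n. \<Sum>j<d. c' n j)"
    and IH_G: "\<forall>j<d. AE u in \<mu> K j. convergent (\<lambda>n. - \<alpha> n j * u - e n j + c' n j)"
    by blast
  have \<alpha>: "convergent (\<lambda>n. \<alpha> n j)" and c'e: "convergent (\<lambda>n. c' n j - e n j)" if j: "j < d" for j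
  proof -
    have "AE u in \<mu> K j. convergent (\<lambda>n. (- \<alpha> n j) * u + (c' n j - e n j))"
      using IH_G j by (simp add: algebra_simps)
    from nondirac_law_AE_convergent_affine[OF nondirac_K[OF order.refl j] this]
    show "convergent (\<lambda>n. \<alpha> n j)" "convergent (\<lambda>n. c' n j - e n j)"
      by (simp_all add: convergent_minus_iff[symmetric])
  qed
  have "AE x in PiM {..K} (\<lambda>t. PiM {..<d} (\<mu> t)). convergent (\<lambda>n. H n K j x)" if "j < d" for j
    using slopes[OF that] by (rule eventually_mono) (drule convergent_add[OF _ \<alpha>[OF that]], simp)
  with IH_H have "\<forall>t<Suc K. \<forall>j<d.
      AE x in PiM {..t} (\<lambda>t. PiM {..<d} (\<mu> t)). convergent (\<lambda>n. H n t j x)"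
    using less_Suc_eq by auto
  moreover have "convergent (\<lambda>n. \<Sum>j<d. e n j)"
    using convergent_diff[OF IH_sum convergent_sum[of "{..<d}" "\<lambda>j n. c' n j - e n j"]] c'e
    by (simp add: sum_subtractf)
  moreover have "AE u in \<mu> (Suc K) j. convergent (\<lambda>n. G n j u + e n j)" if "j < d" for j
  proof (rule eventually_mono[OF static[OF that]])
    fix u assume "convergent (\<lambda>n. \<alpha> n j * u + G n j u + e n j)"
    from convergent_diff[OF this convergent_mult[OF \<alpha>[OF that] convergent_const[of u]]]
    show "convergent (\<lambda>n. G n j u + e n j)" by simp
  qed
  ultimately show ?case by blast
qed

lemma convergent_offsets_normalize:
  fixes c :: "nat \<Rightarrow> nat \<Rightarrow> real"
  assumes "convergent (\<lambda>n. \<Sum>j<d. c n j)" "0 < d"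
  obtains c' where "\<And>n. (\<Sum>j<d. c' n j) = 0"
    and "\<And>j f. convergent (\<lambda>n. f n + c n j) \<Longrightarrow> convergent (\<lambda>n. f n + c' n j)"
proof
  define c' where "c' n j = c n j - (if j = 0 then \<Sum>i<d. c n i else 0)" for n j
  show "(\<Sum>j<d. c' n j) = 0" for n
    using assms(2) by (simp add: c'_def sum_subtractf)
  have diff: "convergent (\<lambda>n. c' n j - c n j)" for j
    using assms(1)
    by (cases "j = 0") (simp_all add: c'_def convergent_minus_iff[symmetric] convergent_const)
  show "convergent (\<lambda>n. f n + c' n j)" if "convergent (\<lambda>n. f n + c n j)" for j f
    using convergent_add[OF that diff[of j]] by simp
qed

lemma (in prob_space) alternating_convergent_AE_eq_add_const:
  fixes f f' :: "nat \<Rightarrow> 'a \<Rightarrow> real" and c :: "nat \<Rightarrow> nat \<Rightarrow> real"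
  assumes sum_c: "\<forall>n. (\<Sum>j<d. c n j) = 0"
    and conv: "\<forall>j<d. AE x in M. convergent (\<lambda>n. (if even n then f j x else f' j x) + c n j)"
  shows "\<exists>C. (\<Sum>j<d. C j) = 0 \<and> (\<forall>j<d. AE x in M. f j x = f' j x + C j)"
proof -
  define C where "C j = lim (\<lambda>n. c (Suc (2 * n)) j - c (2 * n) j)" for j
  have lim_C: "(\<lambda>n. c (Suc (2 * n)) j - c (2 * n) j) \<longlonglongrightarrow> C j \<and> f j x = f' j x + C j"
    if "convergent (\<lambda>n. (if even n then f j x else f' j x) + c n j)" for j x
  proof -
    from that have "(\<lambda>n. c (Suc (2 * n)) j - c (2 * n) j) \<longlonglongrightarrow> f j x - f' j x"
      by (rule alternating_convergent_tendsto_diff)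
    moreover from this have "C j = f j x - f' j x"
      unfolding C_def by (rule limI)
    ultimately show ?thesis by simp
  qed
  have "AE x in M. \<forall>j\<in>{..<d}. convergent (\<lambda>n. (if even n then f j x else f' j x) + c n j)"
    using conv by (intro AE_finite_allI) auto
  then obtain x where "\<forall>j\<in>{..<d}. convergent (\<lambda>n. (if even n then f j x else f' j x) + c n j)"
    using AE_imp_ex by blast
  then have "(\<lambda>n. \<Sum>j<d. c (Suc (2 * n)) j - c (2 * n) j) \<longlonglongrightarrow> (\<Sum>j<d. C j)"
    using lim_C by (intro tendsto_sum) auto
  moreover have "(\<lambda>n. \<Sum>j<d. c (Suc (2 * n)) j - c (2 * n) j) = (\<lambda>_. 0)"
    using sum_c by (simp add: sum_subtractf)
  ultimately have "(\<Sum>j<d. C j) = 0"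
    using LIMSEQ_const_iff by metis
  moreover have "AE x in M. f j x = f' j x + C j" if "j < d" for j
  proof -
    have "AE x in M. convergent (\<lambda>n. (if even n then f j x else f' j x) + c n j)"
      using conv that by blast
    then show ?thesis
      by (rule eventually_mono) (rule lim_C[THEN conjunct2])
  qed
  ultimately show ?thesis
    by blast
qed

lemma is_portfolio_position_limit:
  assumes pos: "\<And>n. is_portfolio_position d T P (Vs n) (hhs n) (ggs n)"
    and sum_c: "\<forall>n. (\<Sum>j<d. c n j) = 0"
    and H: "\<forall>t<T - 1. \<forall>j<d. AE x in P. convergent (\<lambda>n. hhs n t j (restrict x {..t}))"
    and G: "\<forall>j<d. AE x in P. convergent (\<lambda>n. ggs n j (x (T - 1) j) + c n j)"
    and lim: "AE x in P. (\<lambda>n. Vs n x) \<longlonglongrightarrow> V x"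
  shows "is_portfolio_position d T P V
    (\<lambda>t j z. lim (\<lambda>n. hhs n t j z)) (\<lambda>j u. lim (\<lambda>n. ggs n j u + c n j))"
  unfolding is_portfolio_position_def
proof (intro conjI allI impI)
  show "(\<lambda>z. lim (\<lambda>n. hhs n t j z)) \<in> borel_measurable (past_space d t)"
    if "t < T - 1" "j < d" for t j
    using pos that by (intro borel_measurable_lim_metric) (auto simp: is_portfolio_position_def)
  show "(\<lambda>u. lim (\<lambda>n. ggs n j u + c n j)) \<in> borel_measurable borel" if "j < d" for j
    using pos that by (intro borel_measurable_lim_metric borel_measurable_add borel_measurable_const)
      (auto simp: is_portfolio_position_def)
  have "AE x in P. \<forall>n.
      Vs n x = (\<Sum>t<T - 1. \<Sum>j<d. hhs n t j (restrict x {..t}) * (x (Suc t) j - x t j))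
      + (\<Sum>j<d. ggs n j (x (T - 1) j) + c n j)"
    using pos sum_c unfolding is_portfolio_position_def by (simp add: AE_all_countable sum.distrib)
  moreover have "AE x in P. \<forall>t\<in>{..<T - 1}. \<forall>j\<in>{..<d}. convergent (\<lambda>n. hhs n t j (restrict x {..t}))"
    using H by (intro AE_finite_allI) auto
  moreover have "AE x in P. \<forall>j\<in>{..<d}. convergent (\<lambda>n. ggs n j (x (T - 1) j) + c n j)"
    using G by (intro AE_finite_allI) auto
  ultimately show "AE x in P.
      V x = (\<Sum>t<T - 1. \<Sum>j<d. lim (\<lambda>n. hhs n t j (restrict x {..t})) * (x (Suc t) j - x t j))
      + (\<Sum>j<d. lim (\<lambda>n. ggs n j (x (T - 1) j) + c n j))"
    using lim
  proof eventually_elim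
    case (elim x)
    have "(\<lambda>n. Vs n x) \<longlonglongrightarrow>
        (\<Sum>t<T - 1. \<Sum>j<d. lim (\<lambda>n. hhs n t j (restrict x {..t})) * (x (Suc t) j - x t j))
        + (\<Sum>j<d. lim (\<lambda>n. ggs n j (x (T - 1) j) + c n j))"
      unfolding elim(1)[rule_format]
      by (intro tendsto_add tendsto_sum tendsto_mult_right)
        (use elim(2,3) in \<open>auto simp: convergent_LIMSEQ_iff\<close>)
    with elim(4) show ?case
      by (rule LIMSEQ_unique)
  qed
qed

locale marginal_equivalent_model =
  fixes d T :: nat and P :: "(nat \<Rightarrow> nat \<Rightarrow> real) measure"
  assumes d_pos: "d \<ge> 1" and T_ge_2: "T \<ge> 2" and prob_P: "prob_space P"
    and sets_P: "sets P = sets (canon_space d T)"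
    and marginal_nondirac: "\<forall>t<T. \<forall>j<d. \<forall>c. marginal P t j \<noteq> return lborel c"
    and null_sets_marginal_product:
      "\<forall>A\<in>sets P. emeasure P A = 0 \<longleftrightarrow> emeasure (marginal_product d T P) A = 0"
begin

lemma coordinate_measurable: "t < T \<Longrightarrow> j < d \<Longrightarrow> (\<lambda>x. x t j) \<in> measurable P lborel"
  unfolding measurable_cong_sets[OF sets_P refl] canon_space_def
  by (rule measurable_compose[OF measurable_component_singleton[of t]
        measurable_component_singleton[of j]]) auto

lemma nondirac_law_marginal: "t < T \<Longrightarrow> j < d \<Longrightarrow> nondirac_law (marginal P t j)"
  using marginal_nondirac prob_space.prob_space_distr[OF prob_P coordinate_measurable]
  by (simp add: nondirac_law_def marginal_def)

lemma AE_iff_AE_marginal_product: "(AE x in P. \<phi> x) \<longleftrightarrow> (AE x in marginal_product d T P. \<phi> x)"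
proof -
  have sets: "sets (marginal_product d T P) = sets P"
    unfolding sets_P canon_space_def marginal_product_def marginal_def
    by (intro sets_PiM_cong refl) simp
  then have "null_sets P = null_sets (marginal_product d T P)"
    using null_sets_marginal_product by (auto simp: null_sets_def)
  then show ?thesis
    using sets_eq_imp_space_eq[OF sets] by (simp add: eventually_ae_filter)
qed

lemma AE_restrict_past:
  assumes "t < T" and "AE y in PiM {..t} (\<lambda>s. PiM {..<d} (marginal P s)). \<phi> y"
  shows "AE x in P. \<phi> (restrict x {..t})"
proof -
  have "prob_space (PiM {..<d} (marginal P s))" if "s \<in> {..<T}" for s
    using that nondirac_law_marginal by (intro prob_space_PiM) (simp add: nondirac_law_def)
  moreover have "{..t} \<subseteq> {..<T}" using assms(1) by auto
  ultimately show ?thesis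
    using AE_PiM_restrict[OF _ _ _ assms(2)] unfolding AE_iff_AE_marginal_product marginal_product_def
    by blast
qed

lemma AE_marginal_coordinate:
  assumes "t < T" "j < d" and "AE u in marginal P t j. \<phi> u"
  shows "AE x in P. \<phi> (x t j)"
  using AE_distrD[OF coordinate_measurable[OF assms(1,2)] assms(3)[unfolded marginal_def]] .

lemma portfolio_positions_convergent:
  assumes pos: "\<And>n. is_portfolio_position d T P (Vs n) (hhs n) (ggs n)"
    and conv: "AE x in P. convergent (\<lambda>n. Vs n x)"
  shows "\<exists>c. (\<forall>n. (\<Sum>j<d. c n j) = 0) \<and>
    (\<forall>t<T - 1. \<forall>j<d. AE x in P. convergent (\<lambda>n. hhs n t j (restrict x {..t}))) \<and>
    (\<forall>j<d. AE x in P. convergent (\<lambda>n. ggs n j (x (T - 1) j) + c n j))"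
proof -
  have "AE x in P. \<forall>n. Vs n x = trading_gains d (T - 1) (hhs n) x + (\<Sum>j<d. ggs n j (x (T - 1) j))"
    using pos unfolding is_portfolio_position_def trading_gains_def by (simp add: AE_all_countable)
  with conv have conv_P: "AE x in P.
      convergent (\<lambda>n. trading_gains d (T - 1) (hhs n) x + (\<Sum>j<d. ggs n j (x (T - 1) j)))"
    by eventually_elim simp
  have product: "marginal_product d T P = PiM {..T - 1} (\<lambda>t. PiM {..<d} (marginal P t))"
  proof -
    have "{..<T} = {..T - 1}" using T_ge_2 by auto
    then show ?thesis by (simp add: marginal_product_def)
  qed
  have "AE x in PiM {..T - 1} (\<lambda>t. PiM {..<d} (marginal P t)).
      convergent (\<lambda>n. trading_gains d (T - 1) (hhs n) x + (\<Sum>j<d. ggs n j (x (T - 1) j)))"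
    using conv_P unfolding AE_iff_AE_marginal_product product .
  moreover have "nondirac_law (marginal P t j)" if "t \<le> T - 1" "j < d" for t j
    using that T_ge_2 by (intro nondirac_law_marginal) auto
  ultimately obtain c where
    H: "\<forall>t<T - 1. \<forall>j<d.
      AE y in PiM {..t} (\<lambda>s. PiM {..<d} (marginal P s)). convergent (\<lambda>n. hhs n t j y)"
    and "convergent (\<lambda>n. \<Sum>j<d. c n j)"
    and G: "\<forall>j<d. AE u in marginal P (T - 1) j. convergent (\<lambda>n. ggs n j u + c n j)"
    using convergent_positions_PiM[of "T - 1" d "marginal P" hhs ggs] by blast
  with d_pos obtain c' where c': "\<And>n. (\<Sum>j<d. c' n j) = 0"
    "\<And>j f. convergent (\<lambda>n. f n + c n j) \<Longrightarrow> convergent (\<lambda>n. f n + c' n j)"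
    by (elim convergent_offsets_normalize) auto
  have "AE x in P. convergent (\<lambda>n. ggs n j (x (T - 1) j) + c' n j)" if "j < d" for j
  proof (rule AE_marginal_coordinate)
    have "AE u in marginal P (T - 1) j. convergent (\<lambda>n. ggs n j u + c n j)"
      using G that by blast
    then show "AE u in marginal P (T - 1) j. convergent (\<lambda>n. ggs n j u + c' n j)"
      by (rule eventually_mono) (rule c'(2))
  qed (use T_ge_2 that in auto)
  moreover have "AE x in P. convergent (\<lambda>n. hhs n t j (restrict x {..t}))"
    if "t < T - 1" "j < d" for t j
    using H that by (intro AE_restrict_past) auto
  ultimately show ?thesis
    using c'(1) by blast
qed

lemma portfolio_position_unique:
  assumes "is_portfolio_position d T P V hh gg" "is_portfolio_position d T P V hh' gg'"
  shows "\<forall>t<T - 1. \<forall>j<d. AE x in P. hh t j (restrict x {..t}) = hh' t j (restrict x {..t})"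
    and "\<exists>c. (\<Sum>j<d. c j) = 0 \<and> (\<forall>j<d. AE x in P. gg j (x (T - 1) j) = gg' j (x (T - 1) j) + c j)"
proof -
  define hs where "hs n = (if even n then hh else hh')" for n :: nat
  define gs where "gs n = (if even n then gg else gg')" for n :: nat
  have "is_portfolio_position d T P ((\<lambda>_. V) n) (hs n) (gs n)" for n
    using assms by (simp add: hs_def gs_def)
  moreover have "AE x in P. convergent (\<lambda>n. (\<lambda>_. V) n x)"
    by (simp add: convergent_const)
  ultimately obtain c where c0: "\<forall>n. (\<Sum>j<d. c n j) = 0"
    and H: "\<forall>t<T - 1. \<forall>j<d. AE x in P. convergent (\<lambda>n. hs n t j (restrict x {..t}))"
    and G: "\<forall>j<d. AE x in P. convergent (\<lambda>n. gs n j (x (T - 1) j) + c n j)"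
    using portfolio_positions_convergent[where Vs="\<lambda>_. V" and hhs=hs and ggs=gs] by blast
  \<comment> \<open>the \<open>+ 0\<close> is a zero offset sequence for \<open>alternating_convergent_tendsto_diff\<close>\<close>
  have hs: "hs n t j z = (if even n then hh t j z else hh' t j z) + 0" for n t j z
    by (simp add: hs_def)
  have gs: "gs n j u = (if even n then gg j u else gg' j u)" for n j u
    by (simp add: gs_def)
  show "\<forall>t<T - 1. \<forall>j<d. AE x in P. hh t j (restrict x {..t}) = hh' t j (restrict x {..t})"
  proof (intro allI impI)
    fix t j assume "t < T - 1" "j < d"
    from H[rule_format, OF this]
    show "AE x in P. hh t j (restrict x {..t}) = hh' t j (restrict x {..t})"
      unfolding hs
    proof (rule eventually_mono)
      fix x
      assume "convergent
        (\<lambda>n. (if even n then hh t j (restrict x {..t}) else hh' t j (restrict x {..t})) + 0)"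
      from alternating_convergent_tendsto_diff[OF this]
      show "hh t j (restrict x {..t}) = hh' t j (restrict x {..t})"
        by (simp add: LIMSEQ_const_iff)
    qed
  qed
  from G have "\<forall>j<d. AE x in P.
      convergent (\<lambda>n. (if even n then gg j (x (T - 1) j) else gg' j (x (T - 1) j)) + c n j)"
    unfolding gs .
  from prob_space.alternating_convergent_AE_eq_add_const[OF prob_P c0 this]
  show "\<exists>c. (\<Sum>j<d. c j) = 0 \<and> (\<forall>j<d. AE x in P. gg j (x (T - 1) j) = gg' j (x (T - 1) j) + c j)" .
qed

lemma semistatic_closed:
  assumes semi: "\<And>n. semistatic d T P (Vs n)" and V: "V \<in> borel_measurable P"
    and lim: "AE x in P. (\<lambda>n. Vs n x) \<longlonglongrightarrow> V x"
  shows "semistatic d T P V"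
proof -
  obtain hhs ggs where pos: "\<And>n. is_portfolio_position d T P (Vs n) (hhs n) (ggs n)"
    using semi unfolding semistatic_def by metis
  have "AE x in P. convergent (\<lambda>n. Vs n x)"
    using lim by (rule eventually_mono) (auto simp: convergent_def)
  from portfolio_positions_convergent[OF pos this] obtain c where "\<forall>n. (\<Sum>j<d. c n j) = 0"
    and "\<forall>t<T - 1. \<forall>j<d. AE x in P. convergent (\<lambda>n. hhs n t j (restrict x {..t}))"
    and "\<forall>j<d. AE x in P. convergent (\<lambda>n. ggs n j (x (T - 1) j) + c n j)"
    by blast
  from is_portfolio_position_limit[OF pos this lim] V show ?thesis
    unfolding semistatic_def by blast
qed

end

theorem theorem3p1:
  fixes d T :: nat and P :: "(nat \<Rightarrow> nat \<Rightarrow> real) measure"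
  assumes "d \<ge> 1" and "T \<ge> 2"
    and "prob_space P"
    and "sets P = sets (canon_space d T)"
    and "\<forall>t<T. \<forall>j<d. \<forall>c. marginal P t j \<noteq> return lborel c"
    and "\<forall>A\<in>sets P. emeasure P A = 0 \<longleftrightarrow> emeasure (marginal_product d T P) A = 0"
  shows "(\<forall>Vs V. (\<forall>n. semistatic d T P (Vs n)) \<and> V \<in> borel_measurable P \<and>
                 (AE x in P. (\<lambda>n. Vs n x) \<longlonglongrightarrow> V x) \<longrightarrow> semistatic d T P V)
       \<and> (\<forall>V hh gg hh' gg'. is_portfolio_position d T P V hh gg \<and> is_portfolio_position d T P V hh' gg' \<longrightarrow>
            (\<forall>t<T - 1. \<forall>j<d. AE x in P. hh t j (restrict x {..t}) = hh' t j (restrict x {..t})) \<and>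
            (\<exists>c :: nat \<Rightarrow> real. (\<Sum>j<d. c j) = 0 \<and>
               (\<forall>j<d. AE x in P. gg j (x (T - 1) j) = gg' j (x (T - 1) j) + c j)))
       \<and> (\<forall>Vs hhs ggs. (\<forall>n. semistatic d T P (Vs n) \<and> is_portfolio_position d T P (Vs n) (hhs n) (ggs n)) \<and>
                 (AE x in P. convergent (\<lambda>n. Vs n x)) \<longrightarrow>
            (\<exists>c :: nat \<Rightarrow> nat \<Rightarrow> real. (\<forall>n. (\<Sum>j<d. c n j) = 0) \<and>
               (\<forall>t<T - 1. \<forall>j<d. AE x in P. convergent (\<lambda>n. hhs n t j (restrict x {..t}))) \<and>
               (\<forall>j<d. AE x in P. convergent (\<lambda>n. ggs n j (x (T - 1) j) + c n j))))"
proof -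
  interpret marginal_equivalent_model d T P
    using assms by (rule marginal_equivalent_model.intro)
  show ?thesis
    apply (intro conjI; intro allI impI)
    subgoal using semistatic_closed by blast
    subgoal using portfolio_position_unique by blast
    subgoal using portfolio_positions_convergent by blast
    done
qed

end
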